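(* Let $p=p(n)$ with $p/n\to y\in(0,\infty)$, and let $L=L_T$, $L(i,j)=i-j$. Let $\omega$ be a word of length $2k$ with $b$ distinct letters and $r+1$ even generating vertices. Then the limit $\lim_{n\to\infty}|\Pi_{S_T}(\omega)|/(p^{r+1}n^{b-r})$ exists, and it is strictly positive if and only if $\omega$ is a symmetric word (otherwise it equals $0$).
   Context: Words: a word of length $m$ is a sequence of letters whose distinct letters first appear in alphabetical order. A word is symmetric if each distinct letter appears the same number of times in odd positions as in even positions. Circuits for $S_A$ with link function $L$: maps $\pi:\{0,\dots,2k\}\to\mathbb N$ with $\pi(0)=\pi(2k)$, $1\le\pi(2i)\le p$, $1\le\pi(2i-1)\le n$; $\xi_\pi(2i-1)=L(\pi(2i-2),\pi(2i-1))$, $\xi_\pi(2i)=L(\pi(2i),\pi(2i-1))$. For a word $\omega$ of length $2k$, $\Pi_{S_A}(\omega)=\{\pi:\ \omega[i]=\omega[j]\iff\xi_\pi(i)=\xi_\pi(j)\ \forall i,j\}$. The vertex $\pi(i)$ is generating if $i=0$ or $\omega[i]$ is the first occurrence of its letter; it is even if $i$ is even. *)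

theory Defs
  imports Complex_Main
begin

text \<open>Words are lists of natural-number letters; position i (1-indexed, 1 \<le> i \<le> length w)
  carries the letter w!(i-1). A word is one whose distinct letters first appear in the
  order 0, 1, 2, ... (restricted growth condition).\<close>

definition is_word :: "nat list \<Rightarrow> bool" where
  "is_word w \<longleftrightarrow> (\<forall>i < length w. w ! i \<le> card (set (take i w)))"

definition symmetric_word :: "nat list \<Rightarrow> bool" where
  "symmetric_word w \<longleftrightarrow>
     (\<forall>a \<in> set w. card {i \<in> {1..length w}. odd i \<and> w ! (i - 1) = a}
                 = card {i \<in> {1..length w}. even i \<and> w ! (i - 1) = a})"

text \<open>Position i (1 \<le> i \<le> length w) is generating if it is the first occurrence of its letter.\<close>
definition first_occ :: "nat list \<Rightarrow> nat \<Rightarrow> bool" where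
  "first_occ w i \<longleftrightarrow> w ! (i - 1) \<notin> set (take (i - 1) w)"

text \<open>Number of even generating vertices pi(i), i \<in> {0..2k}: vertex 0 plus even first occurrences.\<close>
definition even_generating :: "nat list \<Rightarrow> nat" where
  "even_generating w = 1 + card {i \<in> {1..length w}. even i \<and> first_occ w i}"

text \<open>Circuits pi : {0..2k} \<rightarrow> nat, represented as lists of length 2k+1.\<close>
definition circuits :: "nat \<Rightarrow> nat \<Rightarrow> nat \<Rightarrow> nat list set" where
  "circuits p n k = {\<pi>. length \<pi> = 2 * k + 1 \<and> \<pi> ! 0 = \<pi> ! (2 * k)
      \<and> (\<forall>i \<le> k. 1 \<le> \<pi> ! (2 * i) \<and> \<pi> ! (2 * i) \<le> p)
      \<and> (\<forall>i \<in> {1..k}. 1 \<le> \<pi> ! (2 * i - 1) \<and> \<pi> ! (2 * i - 1) \<le> n)}"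

definition xi :: "(nat \<Rightarrow> nat \<Rightarrow> int) \<Rightarrow> nat list \<Rightarrow> nat \<Rightarrow> int" where
  "xi L \<pi> j = (if odd j then L (\<pi> ! (j - 1)) (\<pi> ! j) else L (\<pi> ! j) (\<pi> ! (j - 1)))"

definition Pi_S :: "(nat \<Rightarrow> nat \<Rightarrow> int) \<Rightarrow> nat \<Rightarrow> nat \<Rightarrow> nat \<Rightarrow> nat list \<Rightarrow> nat list set" where
  "Pi_S L p n k w = {\<pi> \<in> circuits p n k.
      \<forall>i \<in> {1..2 * k}. \<forall>j \<in> {1..2 * k}. (w ! (i - 1) = w ! (j - 1) \<longleftrightarrow> xi L \<pi> i = xi L \<pi> j)}"

definition L_T :: "nat \<Rightarrow> nat \<Rightarrow> int" where
  "L_T i j = int i - int j"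

end

theory Submission
  imports Defs "HOL-Library.FuncSet"
begin

text \<open>For \<open>L_T(i, j) = i - j\<close> the vertices of a circuit are alternating partial sums of
  its \<open>\<xi>\<close>-values, so a circuit is determined by its start \<open>\<pi>(0)\<close> and one \<open>\<xi>\<close>-value per
  letter. This identifies \<open>\<Pi>\<^sub>S\<^sub>T(\<omega>)\<close> with the integer vectors in \<open>\<int>^(b+1)\<close> with pairwise
  distinct letter values whose partial sums stay in \<open>[1, p]\<close> resp. \<open>[1, n]\<close> and which close up:
  \<open>\<Sum>\<^sub>x (e\<^sub>x - o\<^sub>x) z\<^sub>x = 0\<close>, where \<open>e\<^sub>x\<close> and \<open>o\<^sub>x\<close> count the even and odd positions of the
  letter \<open>x\<close>. Distinctness only removes \<open>O(n^b)\<close> vectors.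

  If \<open>\<omega>\<close> is symmetric the closing condition is void and we count the lattice points of a
  polyhedron dilated by a factor proportional to \<open>n\<close>. Comparing with the cells of a grid of
  mesh \<open>1/m\<close> shows that this count divided by \<open>n^(b+1)\<close> converges, and a box of side
  proportional to \<open>n\<close> inside the region makes the limit positive. If \<open>\<omega>\<close> is not symmetric, the
  closing condition determines one coordinate from the others, leaving \<open>O(n^b)\<close> vectors.
  Finally \<open>p^(r+1) n^(b-r) \<sim> y^(r+1) n^(b+1)\<close> because \<open>r \<le> b\<close>.\<close>

section \<open>Lattice points in dilated polyhedra\<close>

definition lattice :: "nat \<Rightarrow> (nat \<Rightarrow> int) set" where
  "lattice d = (\<Pi>\<^sub>E i\<in>{..<d}. UNIV)"

definition int_box :: "nat \<Rightarrow> int \<Rightarrow> (nat \<Rightarrow> int) set" where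
  "int_box d K = (\<Pi>\<^sub>E i\<in>{..<d}. {-K..K})"

definition lin_form :: "nat \<Rightarrow> (nat \<Rightarrow> int) \<Rightarrow> (nat \<Rightarrow> int) \<Rightarrow> int" where
  "lin_form d a z = (\<Sum>i<d. a i * z i)"

definition l1_norm :: "nat \<Rightarrow> (nat \<Rightarrow> int) \<Rightarrow> int" where
  "l1_norm d a = (\<Sum>i<d. \<bar>a i\<bar>)"

definition polyhedron :: "nat \<Rightarrow> 'j set \<Rightarrow> ('j \<Rightarrow> nat \<Rightarrow> int) \<Rightarrow> ('j \<Rightarrow> real) \<Rightarrow> (nat \<Rightarrow> int) set" where
  "polyhedron d J a t = {z \<in> lattice d. \<forall>j\<in>J. real_of_int (lin_form d (a j) z) \<le> t j}"

lemma l1_norm_nonneg: "0 \<le> l1_norm d a"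
  by (simp add: l1_norm_def sum_nonneg)

lemma int_box_subset_lattice: "int_box d K \<subseteq> lattice d"
  by (auto simp: int_box_def lattice_def PiE_iff)

lemma finite_int_box: "finite (int_box d K)"
  by (simp add: int_box_def finite_PiE)

lemma polyhedron_mono:
  "(\<And>j. j \<in> J \<Longrightarrow> t j \<le> t' j) \<Longrightarrow> polyhedron d J a t \<subseteq> polyhedron d J a t'"
  by (force simp: polyhedron_def)

lemma int_Ico_eq:
  fixes \<alpha> \<beta> :: real
  shows "{x::int. \<alpha> \<le> x \<and> x < \<beta>} = {\<lceil>\<alpha>\<rceil>..<\<lceil>\<beta>\<rceil>}"
  by (auto simp: ceiling_le_iff less_ceiling_iff)

lemma card_int_Ico_bounds:
  fixes \<alpha> \<beta> :: real
  assumes "\<alpha> \<le> \<beta>"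
  shows "\<beta> - \<alpha> - 1 \<le> real (card {x::int. \<alpha> \<le> x \<and> x < \<beta>})"
    and "real (card {x::int. \<alpha> \<le> x \<and> x < \<beta>}) \<le> \<beta> - \<alpha> + 1"
proof -
  have "\<lceil>\<alpha>\<rceil> \<le> \<lceil>\<beta>\<rceil>"
    using assms by (simp add: ceiling_mono)
  then have "real (card {x::int. \<alpha> \<le> x \<and> x < \<beta>}) = of_int \<lceil>\<beta>\<rceil> - of_int \<lceil>\<alpha>\<rceil>"
    by (simp add: int_Ico_eq)
  then show "\<beta> - \<alpha> - 1 \<le> real (card {x::int. \<alpha> \<le> x \<and> x < \<beta>})"
    and "real (card {x::int. \<alpha> \<le> x \<and> x < \<beta>}) \<le> \<beta> - \<alpha> + 1"
    by linarith+
qed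

lemma int_Ioc_eq:
  fixes L M :: real
  shows "{t::int. L < t \<and> t \<le> M} = {\<lfloor>L\<rfloor> + 1..\<lfloor>M\<rfloor>}"
proof -
  have "t \<in> {\<lfloor>L\<rfloor> + 1..\<lfloor>M\<rfloor>} \<longleftrightarrow> L < t \<and> t \<le> M" for t
    using floor_less_iff[of L t] le_floor_iff[of t M] by (simp only: atLeastAtMost_iff) linarith
  then show ?thesis
    by blast
qed

lemma card_int_Ioc_le:
  fixes L \<Delta> :: real
  assumes "0 \<le> \<Delta>"
  shows "real (card {t::int. L < t \<and> t \<le> L + \<Delta>}) \<le> \<Delta> + 1"
proof -
  have "\<lfloor>L\<rfloor> \<le> \<lfloor>L + \<Delta>\<rfloor>"
    using assms by (simp add: floor_mono)
  then have "real (card {t::int. L < t \<and> t \<le> L + \<Delta>}) = of_int \<lfloor>L + \<Delta>\<rfloor> - of_int \<lfloor>L\<rfloor>"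
    unfolding int_Ioc_eq by simp
  then show ?thesis
    by linarith
qed

lemma card_projection_le:
  fixes X :: "('a \<Rightarrow> 'b) set"
  assumes "finite I" "finite S" "c \<in> I" "X \<subseteq> (\<Pi>\<^sub>E i\<in>I. S)"
    and "\<And>z z'. z \<in> X \<Longrightarrow> z' \<in> X \<Longrightarrow> (\<forall>i\<in>I - {c}. z i = z' i) \<Longrightarrow> z = z'"
  shows "card X \<le> card S ^ (card I - 1)"
proof -
  have "inj_on (\<lambda>z. restrict z (I - {c})) X"
    using assms(5) by (intro inj_onI) (metis restrict_apply')
  moreover have "(\<lambda>z. restrict z (I - {c})) ` X \<subseteq> (\<Pi>\<^sub>E i\<in>I - {c}. S)"
  proof (rule image_subsetI)
    fix z assume "z \<in> X"
    then have "\<forall>i\<in>I - {c}. z i \<in> S"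
      using assms(4) by (auto simp: PiE_iff)
    then show "restrict z (I - {c}) \<in> (\<Pi>\<^sub>E i\<in>I - {c}. S)"
      by (simp add: restrict_PiE_iff)
  qed
  ultimately have "card X \<le> card (\<Pi>\<^sub>E i\<in>I - {c}. S)"
    using assms(1,2) by (intro card_inj_on_le) (simp_all add: finite_PiE)
  then show ?thesis
    using assms(1,3) by (simp add: card_PiE)
qed

lemma card_slab_le:
  fixes L \<Delta> :: real
  assumes "i0 < d" "a i0 \<noteq> 0" "0 \<le> \<Delta>" "0 \<le> K"
  shows "real (card {u \<in> int_box d K. L < lin_form d a u \<and> lin_form d a u \<le> L + \<Delta>})
           \<le> real_of_int (2 * K + 1) ^ (d - 1) * (\<Delta> + 1)"
proof -
  let ?S = "{u \<in> int_box d K. L < lin_form d a u \<and> lin_form d a u \<le> L + \<Delta>}"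
  let ?T = "{t::int. L < t \<and> t \<le> L + \<Delta>}"
  let ?rest = "{..<d} - {i0}"
  define f where "f u = (restrict u ?rest, lin_form d a u)" for u
  have split: "lin_form d a u = a i0 * u i0 + (\<Sum>i\<in>?rest. a i * u i)" for u
    unfolding lin_form_def using assms(1) by (simp add: sum.remove)
  have "inj_on f ?S"
  proof (rule inj_onI)
    fix u v assume u: "u \<in> ?S" and v: "v \<in> ?S" and "f u = f v"
    then have "restrict u ?rest = restrict v ?rest" and lin: "lin_form d a u = lin_form d a v"
      by (simp_all add: f_def)
    then have rest: "\<forall>i\<in>?rest. u i = v i"
      by (metis restrict_apply')
    note lin
    moreover have "(\<Sum>i\<in>?rest. a i * u i) = (\<Sum>i\<in>?rest. a i * v i)"
      using rest by simp
    ultimately have "u i0 = v i0"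
      using assms(2) split[of u] split[of v] by simp
    with rest have "u i = v i" if "i \<in> {..<d}" for i
      using that by (cases "i = i0") auto
    moreover have "u \<in> int_box d K" "v \<in> int_box d K"
      using u v by simp_all
    ultimately show "u = v"
      unfolding int_box_def by (metis PiE_ext)
  qed
  moreover have "f ` ?S \<subseteq> (\<Pi>\<^sub>E i\<in>?rest. {-K..K}) \<times> ?T"
  proof (rule image_subsetI)
    fix u assume u: "u \<in> ?S"
    then have "\<forall>i\<in>?rest. u i \<in> {-K..K}"
      by (auto simp: int_box_def PiE_iff)
    then show "f u \<in> (\<Pi>\<^sub>E i\<in>?rest. {-K..K}) \<times> ?T"
      using u by (simp add: f_def restrict_PiE_iff)
  qed
  ultimately have "card ?S \<le> card ((\<Pi>\<^sub>E i\<in>?rest. {-K..K}) \<times> ?T)"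
    by (intro card_inj_on_le) (simp_all add: finite_PiE int_Ioc_eq)
  also have "\<dots> = nat (2 * K + 1) ^ (d - 1) * card ?T"
    using assms(1) by (simp add: card_PiE card_cartesian_product)
  finally have "card ?S \<le> nat (2 * K + 1) ^ (d - 1) * card ?T" .
  then have "real (card ?S) \<le> real (nat (2 * K + 1) ^ (d - 1) * card ?T)"
    by (simp only: of_nat_le_iff)
  also have "\<dots> = real_of_int (2 * K + 1) ^ (d - 1) * real (card ?T)"
    using assms(4) by (simp only: of_nat_mult of_nat_power of_nat_nat)
  also have "\<dots> \<le> real_of_int (2 * K + 1) ^ (d - 1) * (\<Delta> + 1)"
    using card_int_Ioc_le[OF assms(3)] assms(4) by (intro mult_left_mono) simp_all
  finally show ?thesis .
qed

lemma card_box_polyhedron_diff_le: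
  fixes t t' :: "'j \<Rightarrow> real"
  assumes "finite J" "\<forall>j\<in>J. \<exists>i<d. a j i \<noteq> 0" "0 \<le> K" "\<And>j. j \<in> J \<Longrightarrow> t j \<le> t' j"
  shows "real (card (int_box d K \<inter> polyhedron d J a t')) - real (card (int_box d K \<inter> polyhedron d J a t))
           \<le> real_of_int (2 * K + 1) ^ (d - 1) * (\<Sum>j\<in>J. t' j - t j + 1)"
proof -
  let ?In = "int_box d K \<inter> polyhedron d J a t" and ?Out = "int_box d K \<inter> polyhedron d J a t'"
  define slab where
    "slab j = {u \<in> int_box d K. t j < lin_form d (a j) u \<and> lin_form d (a j) u \<le> t j + (t' j - t j)}" for j
  have sub: "?In \<subseteq> ?Out"
    using polyhedron_mono[of J t t'] assms(4) by blast
  have fin: "finite ?In" "finite ?Out"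
    using finite_int_box by blast+
  have "card ?In \<le> card ?Out"
    using card_mono[OF fin(2) sub] .
  then have "real (card ?Out) - real (card ?In) = real (card (?Out - ?In))"
    using card_Diff_subset[OF fin(1) sub] by (simp add: of_nat_diff)
  also have "card (?Out - ?In) \<le> card (\<Union>j\<in>J. slab j)"
    by (rule card_mono) (auto simp: slab_def polyhedron_def assms(1) finite_int_box not_le)
  also have "\<dots> \<le> (\<Sum>j\<in>J. card (slab j))"
    by (rule card_UN_le[OF assms(1)])
  finally have "real (card ?Out) - real (card ?In) \<le> (\<Sum>j\<in>J. real (card (slab j)))"
    by (simp flip: of_nat_sum)
  also have "\<dots> \<le> (\<Sum>j\<in>J. real_of_int (2 * K + 1) ^ (d - 1) * (t' j - t j + 1))"
  proof (rule sum_mono)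
    fix j assume j: "j \<in> J"
    then obtain i where "i < d" "a j i \<noteq> 0"
      using assms(2) by blast
    then show "real (card (slab j)) \<le> real_of_int (2 * K + 1) ^ (d - 1) * (t' j - t j + 1)"
      unfolding slab_def using card_slab_le[of i d "a j" "t' j - t j" K "t j"] assms(3,4) j by simp
  qed
  finally show ?thesis
    by (simp add: sum_distrib_left)
qed

lemma finite_polyhedron_if_bounded:
  assumes "\<forall>z\<in>polyhedron d J a t. \<forall>i<d. \<bar>real_of_int (z i)\<bar> \<le> B"
  shows "finite (polyhedron d J a t)"
proof (rule finite_subset[OF _ finite_int_box])
  show "polyhedron d J a t \<subseteq> int_box d \<lceil>B\<rceil>"
  proof
    fix z assume z: "z \<in> polyhedron d J a t"
    have "z i \<in> {-\<lceil>B\<rceil>..\<lceil>B\<rceil>}" if "i < d" for i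
    proof -
      have "\<bar>real_of_int (z i)\<bar> \<le> B"
        using assms z that by blast
      then show ?thesis
        by (simp add: abs_le_iff) linarith
    qed
    then show "z \<in> int_box d \<lceil>B\<rceil>"
      using z by (auto simp: polyhedron_def lattice_def int_box_def PiE_iff)
  qed
qed

subsection \<open>Approximation by the cells of a grid\<close>

text \<open>The index of the cube of side \<open>1 / m\<close> containing the rescaled point \<open>z / n\<close>.\<close>

definition mesh_cell :: "nat \<Rightarrow> nat \<Rightarrow> nat \<Rightarrow> (nat \<Rightarrow> int) \<Rightarrow> nat \<Rightarrow> int" where
  "mesh_cell d m n z = (\<lambda>i\<in>{..<d}. \<lfloor>real m * real_of_int (z i) / real n\<rfloor>)"

lemma mesh_cell_fiber:
  assumes "u \<in> lattice d" "0 < m" "0 < n"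
  shows "{z \<in> lattice d. mesh_cell d m n z = u}
           = (\<Pi>\<^sub>E i\<in>{..<d}. {x::int. u i * real n / real m \<le> x \<and> x < (u i + 1) * real n / real m})"
proof -
  have floor_iff: "\<lfloor>real m * real_of_int x / real n\<rfloor> = v \<longleftrightarrow>
      v * real n / real m \<le> x \<and> x < (v + 1) * real n / real m" for x v
    using assms(2,3) by (simp add: floor_eq_iff field_simps)
  show ?thesis (is "?L = ?R")
  proof
    show "?L \<subseteq> ?R"
      by (auto simp: lattice_def mesh_cell_def floor_iff[symmetric] PiE_iff extensional_def)
    show "?R \<subseteq> ?L"
    proof
      fix z assume z: "z \<in> ?R"
      have "mesh_cell d m n z = u"
      proof (rule PiE_ext)
        show "mesh_cell d m n z \<in> (\<Pi>\<^sub>E i\<in>{..<d}. UNIV)" "u \<in> (\<Pi>\<^sub>E i\<in>{..<d}. UNIV)"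
          using assms(1) by (simp_all add: mesh_cell_def lattice_def)
        show "mesh_cell d m n z i = u i" if "i \<in> {..<d}" for i
          using z that by (auto simp: mesh_cell_def floor_iff PiE_iff)
      qed
      then show "z \<in> ?L"
        using z by (auto simp: lattice_def PiE_iff)
    qed
  qed
qed

lemma card_mesh_cell_fiber:
  assumes "u \<in> lattice d" "0 < m" "0 < n"
  shows "finite {z \<in> lattice d. mesh_cell d m n z = u}"
    and "real (card {z \<in> lattice d. mesh_cell d m n z = u}) \<le> (real n / real m + 1) ^ d"
    and "real m \<le> real n \<Longrightarrow> (real n / real m - 1) ^ d \<le> real (card {z \<in> lattice d. mesh_cell d m n z = u})"
proof -
  let ?I = "\<lambda>i. {x::int. u i * real n / real m \<le> x \<and> x < (u i + 1) * real n / real m}"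
  have width: "(u i + 1) * real n / real m - u i * real n / real m = real n / real m" for i
    by (simp add: algebra_simps flip: diff_divide_distrib)
  have ordered: "u i * real n / real m \<le> (u i + 1) * real n / real m" for i
    using assms(2,3) by (simp add: divide_right_mono)
  have card_I: "real n / real m - 1 \<le> real (card (?I i))" "real (card (?I i)) \<le> real n / real m + 1" for i
    using card_int_Ico_bounds[OF ordered[of i]] width[of i] by simp_all
  have card_eq: "real (card {z \<in> lattice d. mesh_cell d m n z = u}) = (\<Prod>i<d. real (card (?I i)))"
    unfolding mesh_cell_fiber[OF assms] by (simp add: card_PiE)
  show "finite {z \<in> lattice d. mesh_cell d m n z = u}"
    unfolding mesh_cell_fiber[OF assms]
    by (intro finite_PiE) (simp_all only: int_Ico_eq finite_lessThan finite_atLeastLessThan_int)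
  show "real (card {z \<in> lattice d. mesh_cell d m n z = u}) \<le> (real n / real m + 1) ^ d"
    unfolding card_eq using prod_mono[of "{..<d}" "\<lambda>i. real (card (?I i))" "\<lambda>_. real n / real m + 1"] card_I
    by simp
  show "(real n / real m - 1) ^ d \<le> real (card {z \<in> lattice d. mesh_cell d m n z = u})"
    if "real m \<le> real n"
  proof -
    have "1 \<le> real n / real m"
      using that assms(2) by simp
    then show ?thesis
      unfolding card_eq using prod_mono[of "{..<d}" "\<lambda>_. real n / real m - 1" "\<lambda>i. real (card (?I i))"] card_I
      by simp
  qed
qed

lemma lin_form_mesh_cell_approx:
  assumes "0 < m" "0 < n"
  shows "\<bar>lin_form d a z / real n - lin_form d a (mesh_cell d m n z) / real m\<bar> \<le> l1_norm d a / real m"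
proof -
  have coordinate: "\<bar>a i * (z i / real n - mesh_cell d m n z i / real m)\<bar> \<le> \<bar>a i\<bar> / real m"
    if "i < d" for i
  proof -
    let ?f = "real m * real_of_int (z i) / real n"
    have "z i / real n - mesh_cell d m n z i / real m = (?f - \<lfloor>?f\<rfloor>) / real m"
      using that assms by (simp add: mesh_cell_def field_simps)
    moreover have "0 \<le> ?f - \<lfloor>?f\<rfloor>" "?f - \<lfloor>?f\<rfloor> \<le> 1"
      by linarith+
    ultimately have "\<bar>z i / real n - mesh_cell d m n z i / real m\<bar> \<le> 1 / real m"
      using assms(1) by (simp add: divide_right_mono)
    then have "\<bar>real_of_int (a i)\<bar> * \<bar>z i / real n - mesh_cell d m n z i / real m\<bar>
               \<le> \<bar>real_of_int (a i)\<bar> * (1 / real m)"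
      by (rule mult_left_mono) simp
    then show ?thesis
      by (simp add: abs_mult)
  qed
  have "lin_form d a z / real n - lin_form d a (mesh_cell d m n z) / real m
        = (\<Sum>i<d. a i * (z i / real n - mesh_cell d m n z i / real m))"
    by (simp add: lin_form_def sum_divide_distrib sum_subtractf right_diff_distrib)
  also have "\<bar>\<dots>\<bar> \<le> (\<Sum>i<d. \<bar>a i\<bar> / real m)"
    using coordinate by (intro order_trans[OF sum_abs] sum_mono) simp
  also have "\<dots> = l1_norm d a / real m"
    by (simp add: l1_norm_def sum_divide_distrib)
  finally show ?thesis .
qed

lemma card_polyhedron_ge_cells:
  fixes c :: "'j \<Rightarrow> real"
  assumes "0 < m" "m \<le> n" "finite (polyhedron d J a c)"
  shows "real (card (int_box d K \<inter> polyhedron d J a (\<lambda>j. real m * c j / real n - l1_norm d (a j))))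
           * (real n / real m - 1) ^ d \<le> real (card (polyhedron d J a c))"
proof -
  let ?G = "int_box d K \<inter> polyhedron d J a (\<lambda>j. real m * c j / real n - l1_norm d (a j))"
  define F where "F u = {z \<in> lattice d. mesh_cell d m n z = u}" for u
  have n: "0 < n"
    using assms(1,2) by simp
  have G_lattice: "?G \<subseteq> lattice d"
    using int_box_subset_lattice by blast
  have F_sub: "(\<Union>u\<in>?G. F u) \<subseteq> polyhedron d J a c"
  proof
    fix z assume "z \<in> (\<Union>u\<in>?G. F u)"
    then obtain u where u: "u \<in> ?G" and z: "z \<in> lattice d" "mesh_cell d m n z = u"
      by (auto simp: F_def)
    have "lin_form d (a j) z \<le> c j" if "j \<in> J" for j
    proof -
      have "lin_form d (a j) u \<le> real m * c j / real n - l1_norm d (a j)"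
        using u that by (auto simp: polyhedron_def)
      then have "lin_form d (a j) u / real m + l1_norm d (a j) / real m \<le> c j / real n"
        using assms(1) n by (simp add: field_simps)
      then have "lin_form d (a j) z / real n \<le> c j / real n"
        using lin_form_mesh_cell_approx[OF assms(1) n, of d "a j" z] unfolding z(2) by linarith
      then show ?thesis
        using n by (simp add: divide_le_cancel)
    qed
    then show "z \<in> polyhedron d J a c"
      using z by (simp add: polyhedron_def)
  qed
  have "real (card ?G) * (real n / real m - 1) ^ d = (\<Sum>u\<in>?G. (real n / real m - 1) ^ d)"
    by simp
  also have "\<dots> \<le> (\<Sum>u\<in>?G. real (card (F u)))"
    using card_mesh_cell_fiber(3)[OF _ assms(1) n] G_lattice assms(2)
    by (intro sum_mono) (auto simp: F_def)
  also have "\<dots> = real (card (\<Union>u\<in>?G. F u))"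
    using card_mesh_cell_fiber(1)[OF _ assms(1) n] G_lattice finite_int_box
    by (subst card_UN_disjoint) (auto simp: F_def)
  also have "\<dots> \<le> real (card (polyhedron d J a c))"
    using card_mono[OF assms(3) F_sub] by simp
  finally show ?thesis .
qed

lemma card_polyhedron_le_cells:
  fixes c :: "'j \<Rightarrow> real" and B :: real
  assumes "0 < m" "0 < n" "\<forall>z\<in>polyhedron d J a c. \<forall>i<d. \<bar>real_of_int (z i)\<bar> \<le> B"
    and "real m * B / real n + 1 \<le> K"
  shows "real (card (polyhedron d J a c))
           \<le> real (card (int_box d K \<inter> polyhedron d J a (\<lambda>j. real m * c j / real n + l1_norm d (a j))))
              * (real n / real m + 1) ^ d"
proof -
  let ?M = "int_box d K \<inter> polyhedron d J a (\<lambda>j. real m * c j / real n + l1_norm d (a j))"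
  define F where "F u = {z \<in> lattice d. mesh_cell d m n z = u}" for u
  have sub: "polyhedron d J a c \<subseteq> (\<Union>u\<in>?M. F u)"
  proof
    fix z assume z: "z \<in> polyhedron d J a c"
    let ?u = "mesh_cell d m n z"
    have "?u i \<in> {-K..K}" if "i < d" for i
    proof -
      let ?f = "real m * real_of_int (z i) / real n"
      have "\<bar>real_of_int (z i)\<bar> \<le> B"
        using assms(3) z that by blast
      then have "real m * \<bar>real_of_int (z i)\<bar> / real n \<le> real m * B / real n"
        by (simp add: divide_right_mono mult_left_mono)
      also have "real m * \<bar>real_of_int (z i)\<bar> / real n = \<bar>?f\<bar>"
        by (simp add: abs_divide abs_mult)
      finally have "\<bar>?f\<bar> \<le> real m * B / real n" .
      then have "- (real m * B / real n) \<le> ?f" "?f \<le> real m * B / real n"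
        using abs_le_D1 abs_le_D2 by fastforce+
      moreover have "?f - 1 < \<lfloor>?f\<rfloor>" "\<lfloor>?f\<rfloor> \<le> ?f"
        by linarith+
      ultimately have "- real_of_int K \<le> \<lfloor>?f\<rfloor>" "real_of_int \<lfloor>?f\<rfloor> \<le> real_of_int K"
        using assms(4) by linarith+
      then show ?thesis
        using that by (simp add: mesh_cell_def)
    qed
    then have "?u \<in> int_box d K"
      by (auto simp: mesh_cell_def int_box_def)
    moreover have "lin_form d (a j) ?u \<le> real m * c j / real n + l1_norm d (a j)" if "j \<in> J" for j
    proof -
      have "lin_form d (a j) z \<le> c j"
        using z that by (simp add: polyhedron_def)
      then have "lin_form d (a j) z / real n \<le> c j / real n"
        by (simp add: divide_right_mono)
      then have "lin_form d (a j) ?u / real m \<le> c j / real n + l1_norm d (a j) / real m"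
        using lin_form_mesh_cell_approx[OF assms(1,2), of d "a j" z] by linarith
      then show ?thesis
        using assms(1,2) by (simp add: field_simps)
    qed
    ultimately have "?u \<in> ?M"
      using int_box_subset_lattice by (auto simp: polyhedron_def)
    moreover have "z \<in> F ?u"
      using z by (simp add: F_def polyhedron_def)
    ultimately show "z \<in> (\<Union>u\<in>?M. F u)"
      by blast
  qed
  have M_lattice: "?M \<subseteq> lattice d"
    using int_box_subset_lattice by blast
  have "real (card (polyhedron d J a c)) \<le> real (card (\<Union>u\<in>?M. F u))"
    using card_mesh_cell_fiber(1)[OF _ assms(1,2)] M_lattice finite_int_box sub
    by (intro of_nat_mono card_mono) (auto simp: F_def)
  also have "\<dots> \<le> (\<Sum>u\<in>?M. real (card (F u)))"
    using card_UN_le[of ?M F] finite_int_box by (auto simp flip: of_nat_sum)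
  also have "\<dots> \<le> (\<Sum>u\<in>?M. (real n / real m + 1) ^ d)"
    using card_mesh_cell_fiber(2)[OF _ assms(1,2)] M_lattice by (intro sum_mono) (auto simp: F_def)
  finally show ?thesis
    by simp
qed

lemma eventually_card_polyhedron_between_cells:
  fixes a :: "'j \<Rightarrow> nat \<Rightarrow> int" and c :: "'j \<Rightarrow> nat \<Rightarrow> real"
  assumes "finite J" "\<forall>j\<in>J. (\<lambda>n. c j n / real n) \<longlonglongrightarrow> \<gamma> j"
    and "eventually (\<lambda>n. \<forall>z\<in>polyhedron d J a (\<lambda>j. c j n). \<forall>i<d. \<bar>real_of_int (z i)\<bar> \<le> C * real n)
           sequentially"
    and "0 < m" "0 < \<epsilon>" "real m * C + 1 \<le> K"
  shows "eventually (\<lambda>n.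
      real (card (int_box d K \<inter> polyhedron d J a (\<lambda>j. real m * (\<gamma> j - \<epsilon>) - l1_norm d (a j))))
        * (1 / real m - 1 / real n) ^ d \<le> real (card (polyhedron d J a (\<lambda>j. c j n))) / real n ^ d \<and>
      real (card (polyhedron d J a (\<lambda>j. c j n))) / real n ^ d
        \<le> real (card (int_box d K \<inter> polyhedron d J a (\<lambda>j. real m * (\<gamma> j + \<epsilon>) + l1_norm d (a j))))
           * (1 / real m + 1 / real n) ^ d) sequentially"
proof -
  let ?P = "\<lambda>n. polyhedron d J a (\<lambda>j. c j n)"
  let ?cells = "\<lambda>t. real (card (int_box d K \<inter> polyhedron d J a t))"
  let ?lo = "\<lambda>j. real m * (\<gamma> j - \<epsilon>) - l1_norm d (a j)"
  let ?hi = "\<lambda>j. real m * (\<gamma> j + \<epsilon>) + l1_norm d (a j)"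
  have "eventually (\<lambda>n. \<forall>j\<in>J. \<bar>c j n / real n - \<gamma> j\<bar> < \<epsilon>) sequentially"
  proof (intro eventually_ball_finite[OF assms(1)] ballI)
    fix j assume "j \<in> J"
    then have "(\<lambda>n. c j n / real n) \<longlonglongrightarrow> \<gamma> j"
      using assms(2) by blast
    from tendstoD[OF this assms(5)] show "eventually (\<lambda>n. \<bar>c j n / real n - \<gamma> j\<bar> < \<epsilon>) sequentially"
      by (simp add: dist_real_def)
  qed
  then show ?thesis
    using assms(3) eventually_ge_at_top[of m]
  proof eventually_elim
    case (elim n)
    let ?lo_n = "\<lambda>j. real m * c j n / real n - l1_norm d (a j)"
    let ?hi_n = "\<lambda>j. real m * c j n / real n + l1_norm d (a j)"
    have n: "0 < n"
      using elim(3) assms(4) by simp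
    have close: "real m * (\<gamma> j - \<epsilon>) \<le> real m * c j n / real n"
      "real m * c j n / real n \<le> real m * (\<gamma> j + \<epsilon>)" if "j \<in> J" for j
    proof -
      have "\<gamma> j - \<epsilon> \<le> c j n / real n" "c j n / real n \<le> \<gamma> j + \<epsilon>"
        using elim(1) that by (auto simp: abs_less_iff)
      from mult_left_mono[OF this(1), of "real m"] mult_left_mono[OF this(2), of "real m"]
      show "real m * (\<gamma> j - \<epsilon>) \<le> real m * c j n / real n"
        "real m * c j n / real n \<le> real m * (\<gamma> j + \<epsilon>)"
        by simp_all
    qed
    have "?cells ?lo * (real n / real m - 1) ^ d \<le> ?cells ?lo_n * (real n / real m - 1) ^ d"
      using close(1) elim(3) assms(4) finite_int_box
      by (intro mult_right_mono of_nat_mono card_mono Int_mono order.refl polyhedron_mono) auto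
    also have "\<dots> \<le> real (card (?P n))"
      using elim(2) elim(3) assms(4) finite_polyhedron_if_bounded
      by (intro card_polyhedron_ge_cells) auto
    finally have lower: "?cells ?lo * (real n / real m - 1) ^ d \<le> real (card (?P n))" .
    have "real (card (?P n)) \<le> ?cells ?hi_n * (real n / real m + 1) ^ d"
      using elim(2) assms(4,6) n by (intro card_polyhedron_le_cells) auto
    also have "\<dots> \<le> ?cells ?hi * (real n / real m + 1) ^ d"
      using close(2) finite_int_box
      by (intro mult_right_mono of_nat_mono card_mono Int_mono order.refl polyhedron_mono) auto
    finally have upper: "real (card (?P n)) \<le> ?cells ?hi * (real n / real m + 1) ^ d" .
    have "(real n / real m - 1) ^ d / real n ^ d = (1 / real m - 1 / real n) ^ d"
         "(real n / real m + 1) ^ d / real n ^ d = (1 / real m + 1 / real n) ^ d"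
      using n assms(4) by (simp_all add: power_divide[symmetric] diff_divide_distrib add_divide_distrib)
    then show ?case
      using divide_right_mono[OF lower, of "real n ^ d"] divide_right_mono[OF upper, of "real n ^ d"]
      by (simp only: times_divide_eq_right[symmetric]) simp
  qed
qed

lemma convergent_if_eventually_within:
  fixes f :: "nat \<Rightarrow> real"
  assumes "\<And>\<eta>. 0 < \<eta> \<Longrightarrow> \<exists>lo. eventually (\<lambda>n. lo \<le> f n \<and> f n \<le> lo + \<eta>) sequentially"
  shows "convergent f"
proof -
  have "Cauchy f"
  proof (rule metric_CauchyI)
    fix e :: real assume "0 < e"
    then obtain lo where "eventually (\<lambda>n. lo \<le> f n \<and> f n \<le> lo + e / 2) sequentially"
      using assms[of "e / 2"] by auto
    then obtain N where N: "\<And>n. N \<le> n \<Longrightarrow> lo \<le> f n \<and> f n \<le> lo + e / 2"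
      by (auto simp: eventually_sequentially)
    have "dist (f p) (f q) < e" if "N \<le> p" "N \<le> q" for p q
    proof -
      have "lo \<le> f p" "f p \<le> lo + e / 2" "lo \<le> f q" "f q \<le> lo + e / 2"
        using N that by auto
      then show ?thesis
        using \<open>0 < e\<close> by (simp add: dist_real_def abs_diff_less_iff)
    qed
    then show "\<exists>M. \<forall>p\<ge>M. \<forall>q\<ge>M. dist (f p) (f q) < e"
      by blast
  qed
  then show ?thesis
    by (simp add: Cauchy_convergent_iff)
qed

lemma exists_mesh_with_thin_boundary:
  fixes a :: "'j \<Rightarrow> nat \<Rightarrow> int" and C \<eta> :: real
  assumes J: "finite J" and d: "0 < d" and a: "\<forall>j\<in>J. \<exists>i<d. a j i \<noteq> 0"
    and C: "0 \<le> C" and \<eta>: "0 < \<eta>"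
  obtains m \<epsilon> K where "0 < m" "0 < \<epsilon>" "real m * C + 1 \<le> K"
    "real (card (int_box d K \<inter> polyhedron d J a (\<lambda>j. real m * (\<gamma> j + \<epsilon>) + l1_norm d (a j)))) / real m ^ d
       \<le> real (card (int_box d K \<inter> polyhedron d J a (\<lambda>j. real m * (\<gamma> j - \<epsilon>) - l1_norm d (a j)))) / real m ^ d
          + \<eta> / 2"
proof -
  define A where "A = (\<Sum>j\<in>J. real_of_int (l1_norm d (a j)))"
  define Q where "Q = (2 * C + 5) ^ (d - 1)"
  define \<epsilon> where "\<epsilon> = \<eta> / (8 * Q * (card J + 1))"
  define m :: nat where "m = nat \<lceil>4 * Q * (2 * A + card J) / \<eta>\<rceil> + 1"
  define K :: int where "K = \<lceil>real m * C\<rceil> + 1"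
  have A: "0 \<le> A"
    using l1_norm_nonneg by (simp add: A_def sum_nonneg)
  have Q: "1 \<le> Q"
    using C by (simp add: Q_def one_le_power)
  have \<epsilon>: "0 < \<epsilon>" "2 * \<epsilon> * card J * Q \<le> \<eta> / 4"
  proof -
    show "0 < \<epsilon>"
      using \<eta> Q by (simp add: \<epsilon>_def)
    have "\<epsilon> * (8 * Q * (card J + 1)) = \<eta>"
      using Q unfolding \<epsilon>_def by simp
    then have "2 * \<epsilon> * (card J + 1) * Q = \<eta> / 4"
      by (simp add: algebra_simps)
    moreover have "2 * \<epsilon> * card J * Q \<le> 2 * \<epsilon> * (card J + 1) * Q"
      using \<open>0 < \<epsilon>\<close> Q by (intro mult_right_mono mult_left_mono) simp_all
    ultimately show "2 * \<epsilon> * card J * Q \<le> \<eta> / 4"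
      by simp
  qed
  have m: "0 < m" "Q * (2 * A + card J) \<le> real m * (\<eta> / 4)"
  proof -
    show "0 < m"
      by (simp add: m_def)
    have "4 * Q * (2 * A + card J) / \<eta> \<le> real m"
      unfolding m_def by linarith
    then show "Q * (2 * A + card J) \<le> real m * (\<eta> / 4)"
      using \<eta> by (simp add: divide_le_eq)
  qed
  have K: "0 \<le> K" "real m * C + 1 \<le> K" "real_of_int (2 * K + 1) \<le> real m * (2 * C + 5)"
  proof -
    have "0 \<le> real m * C" "1 \<le> real m"
      using C m(1) by simp_all
    then show "0 \<le> K" "real m * C + 1 \<le> K" "real_of_int (2 * K + 1) \<le> real m * (2 * C + 5)"
      unfolding K_def by (linarith, linarith, simp add: algebra_simps, linarith)
  qed
  let ?G = "int_box d K \<inter> polyhedron d J a (\<lambda>j. real m * (\<gamma> j - \<epsilon>) - l1_norm d (a j))"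
  let ?M = "int_box d K \<inter> polyhedron d J a (\<lambda>j. real m * (\<gamma> j + \<epsilon>) + l1_norm d (a j))"
  have "real (card ?M) - real (card ?G)
        \<le> real_of_int (2 * K + 1) ^ (d - 1) * (\<Sum>j\<in>J. 2 * real m * \<epsilon> + 2 * l1_norm d (a j) + 1)"
    using card_box_polyhedron_diff_le[OF J a K(1), of "\<lambda>j. real m * (\<gamma> j - \<epsilon>) - l1_norm d (a j)"
        "\<lambda>j. real m * (\<gamma> j + \<epsilon>) + l1_norm d (a j)"] \<epsilon>(1) l1_norm_nonneg
    by (simp add: algebra_simps)
  also have "\<dots> = real_of_int (2 * K + 1) ^ (d - 1) * (2 * real m * \<epsilon> * card J + (2 * A + card J))"
    by (simp add: sum.distrib A_def sum_distrib_left algebra_simps)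
  also have "\<dots> \<le> (real m * (2 * C + 5)) ^ (d - 1) * (2 * real m * \<epsilon> * card J + (2 * A + card J))"
    using K \<epsilon>(1) A by (intro mult_right_mono power_mono) simp_all
  also have "\<dots> = real m ^ (d - 1) * (real m * (2 * \<epsilon> * card J * Q) + Q * (2 * A + card J))"
    unfolding power_mult_distrib Q_def[symmetric] by (simp add: algebra_simps)
  also have "\<dots> \<le> real m ^ (d - 1) * (real m * (\<eta> / 4) + real m * (\<eta> / 4))"
    using \<epsilon>(2) m by (intro mult_left_mono add_mono) simp_all
  also have "\<dots> = real m ^ d * (\<eta> / 2)"
    using d by (simp add: power_eq_if algebra_simps)
  finally have "real (card ?M) / real m ^ d \<le> real (card ?G) / real m ^ d + \<eta> / 2"
    using m(1) by (simp add: field_simps)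
  then show ?thesis
    using that m(1) \<epsilon>(1) K(2) by blast
qed

theorem convergent_card_dilated_polyhedron:
  fixes a :: "'j \<Rightarrow> nat \<Rightarrow> int" and c :: "'j \<Rightarrow> nat \<Rightarrow> real" and C :: real
  assumes J: "finite J" and d: "0 < d" and a: "\<forall>j\<in>J. \<exists>i<d. a j i \<noteq> 0"
    and c: "\<forall>j\<in>J. (\<lambda>n. c j n / real n) \<longlonglongrightarrow> \<gamma> j"
    and C: "0 \<le> C"
    and bounded: "eventually (\<lambda>n. \<forall>z\<in>polyhedron d J a (\<lambda>j. c j n). \<forall>i<d. \<bar>real_of_int (z i)\<bar> \<le> C * real n)
                    sequentially"
  shows "convergent (\<lambda>n. real (card (polyhedron d J a (\<lambda>j. c j n))) / real n ^ d)"
proof (rule convergent_if_eventually_within)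
  fix \<eta> :: real assume \<eta>: "0 < \<eta>"
  obtain m \<epsilon> K where m: "0 < m" and \<epsilon>: "0 < \<epsilon>" and K: "real m * C + 1 \<le> K"
    and gap: "real (card (int_box d K \<inter> polyhedron d J a (\<lambda>j. real m * (\<gamma> j + \<epsilon>) + l1_norm d (a j)))) / real m ^ d
       \<le> real (card (int_box d K \<inter> polyhedron d J a (\<lambda>j. real m * (\<gamma> j - \<epsilon>) - l1_norm d (a j)))) / real m ^ d
          + \<eta> / 2"
    using exists_mesh_with_thin_boundary[OF J d a C \<eta>] by blast
  let ?G = "int_box d K \<inter> polyhedron d J a (\<lambda>j. real m * (\<gamma> j - \<epsilon>) - l1_norm d (a j))"
  let ?M = "int_box d K \<inter> polyhedron d J a (\<lambda>j. real m * (\<gamma> j + \<epsilon>) + l1_norm d (a j))"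
  let ?f = "\<lambda>n. real (card (polyhedron d J a (\<lambda>j. c j n))) / real n ^ d"
  have "(\<lambda>n. real (card ?G) * (1 / real m - 1 / real n) ^ d) \<longlonglongrightarrow> real (card ?G) * (1 / real m - 0) ^ d"
    and "(\<lambda>n. real (card ?M) * (1 / real m + 1 / real n) ^ d) \<longlonglongrightarrow> real (card ?M) * (1 / real m + 0) ^ d"
    by (intro tendsto_intros lim_1_over_n)+
  then have "eventually (\<lambda>n. real (card ?G) / real m ^ d - \<eta> / 4 < real (card ?G) * (1 / real m - 1 / real n) ^ d)
               sequentially"
    and "eventually (\<lambda>n. real (card ?M) * (1 / real m + 1 / real n) ^ d < real (card ?M) / real m ^ d + \<eta> / 4)
               sequentially"
    using \<eta> by (auto simp: power_one_over intro!: order_tendstoD)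
  moreover have "eventually (\<lambda>n. real (card ?G) * (1 / real m - 1 / real n) ^ d \<le> ?f n
                   \<and> ?f n \<le> real (card ?M) * (1 / real m + 1 / real n) ^ d) sequentially"
    by (rule eventually_card_polyhedron_between_cells[OF J c bounded m \<epsilon> K])
  ultimately have "eventually (\<lambda>n. real (card ?G) / real m ^ d - \<eta> / 4 \<le> ?f n
                     \<and> ?f n \<le> (real (card ?G) / real m ^ d - \<eta> / 4) + \<eta>) sequentially"
    by eventually_elim (use gap in linarith)
  then show "\<exists>lo. eventually (\<lambda>n. lo \<le> ?f n \<and> ?f n \<le> lo + \<eta>) sequentially"
    by blast
qed

section \<open>Circuits of the Toeplitz link function as walks\<close>

lemma word_alphabet:
  assumes "is_word w"
  shows "set w = {..<card (set w)}"
proof -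
  have "set (take i w) = {..<card (set (take i w))}" if "i \<le> length w" for i
    using that
  proof (induction i)
    case 0
    then show ?case
      by simp
  next
    case (Suc i)
    then have i: "i < length w"
      by simp
    have IH: "set (take i w) = {..<card (set (take i w))}"
      using Suc by simp
    have take: "set (take (Suc i) w) = insert (w ! i) (set (take i w))"
      using i by (simp add: take_Suc_conv_app_nth)
    have "w ! i \<le> card (set (take i w))"
      using assms i by (simp add: is_word_def)
    then consider "w ! i < card (set (take i w))" | "w ! i = card (set (take i w))"
      by linarith
    then show ?case
    proof cases
      case 1
      then show ?thesis
        using take IH by (metis insert_absorb lessThan_iff)
    next
      case 2
      then have "w ! i \<notin> set (take i w)"
        by (subst IH) simp
      then show ?thesis
        using take IH 2 by (simp add: lessThan_Suc)
    qed
  qed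
  then show ?thesis
    by (metis order_refl take_all)
qed

lemma letter_less_card:
  assumes "is_word w" "l \<in> {1..length w}"
  shows "w ! (l - 1) < card (set w)"
proof -
  have "w ! (l - 1) \<in> set w"
    using assms(2) by (auto intro!: nth_mem)
  then show ?thesis
    by (subst (asm) word_alphabet[OF assms(1)]) simp
qed

lemma letter_occurs:
  assumes "is_word w" "x < card (set w)"
  shows "\<exists>l\<in>{1..length w}. w ! (l - 1) = x"
proof -
  have "x \<in> set w"
    using assms by (subst word_alphabet[OF assms(1)]) simp
  then obtain i where "i < length w" "w ! i = x"
    by (auto simp: in_set_conv_nth)
  then show ?thesis
    by (intro bexI[of _ "Suc i"]) simp_all
qed

definition alt_sign :: "nat \<Rightarrow> int" where
  "alt_sign l = (if odd l then -1 else 1)"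

text \<open>For \<open>L_T\<close> a circuit is a walk: \<open>\<pi>(l) = \<pi>(l - 1) - \<xi>(l)\<close> for odd \<open>l\<close> and
  \<open>\<pi>(l) = \<pi>(l - 1) + \<xi>(l)\<close> for even \<open>l\<close>.  A vector \<open>z\<close> encodes a circuit by its start
  \<open>z 0 = \<pi>(0)\<close> and the common value \<open>z (x + 1)\<close> of \<open>\<xi>\<close> at the positions carrying the letter \<open>x\<close>.\<close>

definition walk :: "nat list \<Rightarrow> (nat \<Rightarrow> int) \<Rightarrow> nat \<Rightarrow> int" where
  "walk w z i = z 0 + (\<Sum>l\<in>{1..i}. alt_sign l * z (w ! (l - 1) + 1))"

definition vertex_bound :: "nat \<Rightarrow> nat \<Rightarrow> nat \<Rightarrow> int" where
  "vertex_bound p n i = int (if even i then p else n)"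

definition walk_vectors :: "nat list \<Rightarrow> nat \<Rightarrow> nat \<Rightarrow> (nat \<Rightarrow> int) set" where
  "walk_vectors w p n = {z \<in> lattice (card (set w) + 1).
     (\<forall>i \<le> length w. 1 \<le> walk w z i \<and> walk w z i \<le> vertex_bound p n i) \<and> walk w z (length w) = z 0}"

definition circuit_vectors :: "nat list \<Rightarrow> nat \<Rightarrow> nat \<Rightarrow> (nat \<Rightarrow> int) set" where
  "circuit_vectors w p n = {z \<in> walk_vectors w p n. inj_on (\<lambda>x. z (x + 1)) {..<card (set w)}}"

lemma circuit_vectors_subset_walk_vectors: "circuit_vectors w p n \<subseteq> walk_vectors w p n"
  by (auto simp: circuit_vectors_def)

definition circuit_of :: "nat list \<Rightarrow> (nat \<Rightarrow> int) \<Rightarrow> nat list" where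
  "circuit_of w z = map (\<lambda>i. nat (walk w z i)) [0..<length w + 1]"

lemma walk_0 [simp]: "walk w z 0 = z 0"
  by (simp add: walk_def)

lemma walk_Suc [simp]: "walk w z (Suc i) = walk w z i + alt_sign (Suc i) * z (w ! i + 1)"
  by (simp add: walk_def)

lemma circuits_iff:
  "\<pi> \<in> circuits p n k \<longleftrightarrow> length \<pi> = 2 * k + 1 \<and> \<pi> ! 0 = \<pi> ! (2 * k) \<and>
     (\<forall>j \<le> 2 * k. 1 \<le> \<pi> ! j \<and> int (\<pi> ! j) \<le> vertex_bound p n j)"
proof -
  let ?E = "\<forall>i \<le> k. 1 \<le> \<pi> ! (2 * i) \<and> \<pi> ! (2 * i) \<le> p"
  let ?O = "\<forall>i \<in> {1..k}. 1 \<le> \<pi> ! (2 * i - 1) \<and> \<pi> ! (2 * i - 1) \<le> n"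
  let ?V = "\<forall>j \<le> 2 * k. 1 \<le> \<pi> ! j \<and> int (\<pi> ! j) \<le> vertex_bound p n j"
  have "?V" if E: ?E and O: ?O
  proof (intro allI impI)
    fix j assume j: "j \<le> 2 * k"
    show "1 \<le> \<pi> ! j \<and> int (\<pi> ! j) \<le> vertex_bound p n j"
    proof (cases "even j")
      case True
      then obtain i where "j = 2 * i"
        by blast
      then show ?thesis
        using E j by (simp add: vertex_bound_def)
    next
      case False
      then obtain i where "j = 2 * i + 1"
        using oddE by blast
      then have "Suc i \<in> {1..k}" "2 * Suc i - 1 = j"
        using j by simp_all
      then show ?thesis
        using O False by (fastforce simp: vertex_bound_def)
    qed
  qed
  moreover have "?E" if V: ?V
  proof (intro allI impI)
    fix i assume "i \<le> k"
    then show "1 \<le> \<pi> ! (2 * i) \<and> \<pi> ! (2 * i) \<le> p"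
      using V[rule_format, of "2 * i"] by (simp add: vertex_bound_def)
  qed
  moreover have "?O" if V: ?V
  proof
    fix i assume i: "i \<in> {1..k}"
    then have "odd (2 * i - 1)"
      by simp
    then show "1 \<le> \<pi> ! (2 * i - 1) \<and> \<pi> ! (2 * i - 1) \<le> n"
      using V[rule_format, of "2 * i - 1"] i by (simp add: vertex_bound_def)
  qed
  ultimately show ?thesis
    unfolding circuits_def by blast
qed

lemma xi_L_T_walk:
  assumes "1 \<le> j" "int (\<pi> ! j) = walk w z j" "int (\<pi> ! (j - 1)) = walk w z (j - 1)"
  shows "xi L_T \<pi> j = z (w ! (j - 1) + 1)"
proof -
  have "walk w z j = walk w z (j - 1) + alt_sign j * z (w ! (j - 1) + 1)"
    using walk_Suc[of w z "j - 1"] assms(1) by simp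
  then show ?thesis
    using assms by (simp add: xi_def L_T_def alt_sign_def)
qed

lemma walk_inj:
  assumes "is_word w" "z \<in> lattice (card (set w) + 1)" "z' \<in> lattice (card (set w) + 1)"
    and "\<And>i. i \<le> length w \<Longrightarrow> walk w z i = walk w z' i"
  shows "z = z'"
proof (rule PiE_ext)
  show "z \<in> (\<Pi>\<^sub>E i\<in>{..<card (set w) + 1}. UNIV)" "z' \<in> (\<Pi>\<^sub>E i\<in>{..<card (set w) + 1}. UNIV)"
    using assms(2,3) by (simp_all add: lattice_def)
  fix c assume c: "c \<in> {..<card (set w) + 1}"
  show "z c = z' c"
  proof (cases c)
    case 0
    then show ?thesis
      using assms(4)[of 0] by simp
  next
    case (Suc x)
    then obtain l where l: "l \<in> {1..length w}" "w ! (l - 1) = x"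
      using letter_occurs[OF assms(1), of x] c by auto
    then obtain i where i: "l = Suc i"
      by (cases l) auto
    have "walk w z l = walk w z' l" "walk w z (l - 1) = walk w z' (l - 1)"
      using assms(4)[of l] assms(4)[of "l - 1"] l(1) by auto
    moreover have "walk w z l = walk w z (l - 1) + alt_sign l * z c"
      "walk w z' l = walk w z' (l - 1) + alt_sign l * z' c"
      using l i Suc by simp_all
    ultimately show ?thesis
      by (simp add: alt_sign_def split: if_splits)
  qed
qed

lemma nth_circuit_of: "i \<le> length w \<Longrightarrow> circuit_of w z ! i = nat (walk w z i)"
  by (simp add: circuit_of_def nth_append del: upt_Suc)

lemma circuit_of_in_Pi_S:
  assumes "is_word w" "length w = 2 * k" "z \<in> circuit_vectors w p n"
  shows "circuit_of w z \<in> Pi_S L_T p n k w"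
proof -
  let ?\<pi> = "circuit_of w z"
  have walk: "\<forall>i \<le> length w. 1 \<le> walk w z i \<and> walk w z i \<le> vertex_bound p n i"
    and closed: "walk w z (length w) = z 0"
    and inj: "inj_on (\<lambda>x. z (x + 1)) {..<card (set w)}"
    using assms(3) by (simp_all add: circuit_vectors_def walk_vectors_def)
  have vertex: "int (?\<pi> ! i) = walk w z i" if "i \<le> length w" for i
    using walk[rule_format, OF that] that by (simp add: nth_circuit_of)
  have xi: "xi L_T ?\<pi> l = z (w ! (l - 1) + 1)" if "l \<in> {1..2 * k}" for l
    using that assms(2) by (intro xi_L_T_walk vertex) auto
  have "length ?\<pi> = 2 * k + 1"
    using assms(2) by (simp add: circuit_of_def)
  moreover have "?\<pi> ! 0 = ?\<pi> ! (2 * k)"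
    using vertex[of 0] vertex[of "2 * k"] closed assms(2) by simp
  moreover have "1 \<le> ?\<pi> ! j \<and> int (?\<pi> ! j) \<le> vertex_bound p n j" if "j \<le> 2 * k" for j
    using vertex[of j] walk[rule_format, of j] that assms(2) by simp
  ultimately have "?\<pi> \<in> circuits p n k"
    unfolding circuits_iff by blast
  moreover have "w ! (i - 1) = w ! (j - 1) \<longleftrightarrow> xi L_T ?\<pi> i = xi L_T ?\<pi> j"
    if "i \<in> {1..2 * k}" "j \<in> {1..2 * k}" for i j
    using inj_on_eq_iff[OF inj] letter_less_card[OF assms(1)] that xi assms(2) by auto
  ultimately show ?thesis
    by (simp add: Pi_S_def)
qed

lemma Pi_S_subset_circuit_of:
  assumes "is_word w" "length w = 2 * k"
  shows "Pi_S L_T p n k w \<subseteq> circuit_of w ` circuit_vectors w p n"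
proof
  fix \<pi> assume "\<pi> \<in> Pi_S L_T p n k w"
  then have circ: "\<pi> \<in> circuits p n k"
    and same: "\<And>i j. i \<in> {1..2 * k} \<Longrightarrow> j \<in> {1..2 * k} \<Longrightarrow>
                  w ! (i - 1) = w ! (j - 1) \<longleftrightarrow> xi L_T \<pi> i = xi L_T \<pi> j"
    by (auto simp: Pi_S_def)
  obtain pos where pos: "\<And>x. x < card (set w) \<Longrightarrow> pos x \<in> {1..length w} \<and> w ! (pos x - 1) = x"
    using letter_occurs[OF assms(1)] by metis
  define z where
    "z = (\<lambda>c\<in>{..<card (set w) + 1}. if c = 0 then int (\<pi> ! 0) else xi L_T \<pi> (pos (c - 1)))"
  have letter_value: "z (w ! (l - 1) + 1) = xi L_T \<pi> l" if "l \<in> {1..length w}" for l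
  proof -
    have x: "w ! (l - 1) < card (set w)"
      by (rule letter_less_card[OF assms(1) that])
    then show ?thesis
      using pos[OF x] same[of "pos (w ! (l - 1))" l] that assms(2) by (simp add: z_def)
  qed
  have vertex: "walk w z i = int (\<pi> ! i)" if "i \<le> length w" for i
    using that
  proof (induction i)
    case 0
    then show ?case
      by (simp add: z_def)
  next
    case (Suc i)
    then show ?case
      using letter_value[of "Suc i"] by (auto simp: xi_def L_T_def alt_sign_def)
  qed
  have bounds: "\<forall>j \<le> 2 * k. 1 \<le> \<pi> ! j \<and> int (\<pi> ! j) \<le> vertex_bound p n j"
    and length: "length \<pi> = 2 * k + 1" and closed: "\<pi> ! 0 = \<pi> ! (2 * k)"
    using circ by (simp_all add: circuits_iff)
  have "z \<in> walk_vectors w p n"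
    using bounds vertex closed assms(2) by (auto simp: walk_vectors_def lattice_def z_def)
  moreover have "inj_on (\<lambda>x. z (x + 1)) {..<card (set w)}"
  proof (rule inj_onI)
    fix x x' assume x: "x \<in> {..<card (set w)}" and x': "x' \<in> {..<card (set w)}"
      and "z (x + 1) = z (x' + 1)"
    then have "xi L_T \<pi> (pos x) = xi L_T \<pi> (pos x')"
      by (simp add: z_def)
    then show "x = x'"
      using pos x x' same[of "pos x" "pos x'"] assms(2) by auto
  qed
  moreover have "circuit_of w z = \<pi>"
  proof (rule nth_equalityI)
    show "length (circuit_of w z) = length \<pi>"
      using length assms(2) by (simp add: circuit_of_def)
    fix i assume "i < length (circuit_of w z)"
    then have "i \<le> length w"
      by (simp add: circuit_of_def)
    then show "circuit_of w z ! i = \<pi> ! i"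
      using vertex by (simp add: nth_circuit_of)
  qed
  ultimately show "\<pi> \<in> circuit_of w ` circuit_vectors w p n"
    unfolding circuit_vectors_def by blast
qed

lemma card_Pi_S_L_T:
  assumes "is_word w" "length w = 2 * k"
  shows "card (Pi_S L_T p n k w) = card (circuit_vectors w p n)"
proof -
  have "inj_on (circuit_of w) (circuit_vectors w p n)"
  proof (rule inj_onI)
    fix z z' assume z: "z \<in> circuit_vectors w p n" and z': "z' \<in> circuit_vectors w p n"
      and eq: "circuit_of w z = circuit_of w z'"
    show "z = z'"
    proof (rule walk_inj[OF assms(1)])
      show "z \<in> lattice (card (set w) + 1)" "z' \<in> lattice (card (set w) + 1)"
        using z z' by (simp_all add: circuit_vectors_def walk_vectors_def)
      fix i assume i: "i \<le> length w"
      then have "1 \<le> walk w z i" "1 \<le> walk w z' i"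
        using z z' by (simp_all add: circuit_vectors_def walk_vectors_def)
      then show "walk w z i = walk w z' i"
        using i arg_cong[OF eq, of "\<lambda>\<pi>. \<pi> ! i"] by (simp add: nth_circuit_of)
    qed
  qed
  moreover have "circuit_of w ` circuit_vectors w p n = Pi_S L_T p n k w"
    using circuit_of_in_Pi_S[OF assms] Pi_S_subset_circuit_of[OF assms] by blast
  ultimately show ?thesis
    by (metis card_image)
qed

section \<open>Counting walk vectors\<close>

definition walk_coeff :: "nat list \<Rightarrow> nat \<Rightarrow> nat \<Rightarrow> int" where
  "walk_coeff w i x = (\<Sum>l\<in>{1..i}. if w ! (l - 1) = x then alt_sign l else 0)"

lemma walk_eq_walk_coeff:
  assumes "is_word w" "i \<le> length w"
  shows "walk w z i = z 0 + (\<Sum>x<card (set w). walk_coeff w i x * z (x + 1))"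
proof -
  have "(\<Sum>x<card (set w). walk_coeff w i x * z (x + 1))
        = (\<Sum>x<card (set w). \<Sum>l\<in>{1..i}. if w ! (l - 1) = x then alt_sign l * z (w ! (l - 1) + 1) else 0)"
    by (auto simp: walk_coeff_def sum_distrib_right intro!: sum.cong)
  also have "\<dots> = (\<Sum>l\<in>{1..i}. \<Sum>x<card (set w). if w ! (l - 1) = x then alt_sign l * z (w ! (l - 1) + 1) else 0)"
    by (rule sum.swap)
  also have "\<dots> = (\<Sum>l\<in>{1..i}. alt_sign l * z (w ! (l - 1) + 1))"
    using letter_less_card[OF assms(1)] assms(2) by (intro sum.cong) (simp_all add: sum.delta)
  finally show ?thesis
    by (simp add: walk_def)
qed

lemma walk_coeff_length:
  "walk_coeff w (length w) x = int (card {l \<in> {1..length w}. even l \<and> w ! (l - 1) = x})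
                               - int (card {l \<in> {1..length w}. odd l \<and> w ! (l - 1) = x})"
proof -
  have "walk_coeff w (length w) x = (\<Sum>l\<in>{l \<in> {1..length w}. w ! (l - 1) = x}. alt_sign l)"
    unfolding walk_coeff_def by (rule sum.inter_filter[symmetric]) simp
  also have "\<dots> = (\<Sum>l\<in>{l \<in> {1..length w}. w ! (l - 1) = x} \<inter> {l. odd l}. - 1)
                  + (\<Sum>l\<in>{l \<in> {1..length w}. w ! (l - 1) = x} \<inter> - {l. odd l}. 1)"
    unfolding alt_sign_def by (rule sum.If_cases) simp
  also have "{l \<in> {1..length w}. w ! (l - 1) = x} \<inter> {l. odd l} = {l \<in> {1..length w}. odd l \<and> w ! (l - 1) = x}"
    by auto
  also have "{l \<in> {1..length w}. w ! (l - 1) = x} \<inter> - {l. odd l} = {l \<in> {1..length w}. even l \<and> w ! (l - 1) = x}"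
    by auto
  finally show ?thesis
    by simp
qed

lemma symmetric_word_iff_walk_coeff:
  assumes "is_word w"
  shows "symmetric_word w \<longleftrightarrow> (\<forall>x<card (set w). walk_coeff w (length w) x = 0)"
  unfolding symmetric_word_def walk_coeff_length by (subst word_alphabet[OF assms]) auto

lemma walk_length_symmetric:
  assumes "is_word w" "symmetric_word w"
  shows "walk w z (length w) = z 0"
  using walk_eq_walk_coeff[OF assms(1) order_refl] assms symmetric_word_iff_walk_coeff by simp

lemma walk_vectors_bounded:
  assumes "is_word w" "z \<in> walk_vectors w p n" "c < card (set w) + 1"
  shows "\<bar>z c\<bar> \<le> int (p + n)"
proof -
  have range: "1 \<le> walk w z i \<and> walk w z i \<le> int (p + n)" if "i \<le> length w" for i
  proof -
    have "1 \<le> walk w z i \<and> walk w z i \<le> vertex_bound p n i"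
      using assms(2) that by (simp add: walk_vectors_def)
    moreover have "vertex_bound p n i \<le> int (p + n)"
      by (simp add: vertex_bound_def)
    ultimately show ?thesis
      by linarith
  qed
  show ?thesis
  proof (cases c)
    case 0
    then show ?thesis
      using range[of 0] by simp
  next
    case (Suc x)
    then obtain l where l: "l \<in> {1..length w}" "w ! (l - 1) = x"
      using letter_occurs[OF assms(1), of x] assms(3) by auto
    then obtain i where i: "l = Suc i"
      by (cases l) auto
    have "walk w z l = walk w z i + alt_sign l * z c"
      using l i Suc by simp
    moreover have "\<bar>alt_sign l * z c\<bar> = \<bar>z c\<bar>"
      by (simp add: alt_sign_def)
    ultimately show ?thesis
      using range[of l] range[of i] l i by (auto simp: abs_if split: if_splits)
  qed
qed

lemma walk_vectors_subset_int_box: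
  assumes "is_word w"
  shows "walk_vectors w p n \<subseteq> int_box (card (set w) + 1) (int (p + n))"
  using walk_vectors_bounded[OF assms]
  by (force simp: walk_vectors_def lattice_def int_box_def PiE_iff abs_le_iff)

lemma finite_walk_vectors: "is_word w \<Longrightarrow> finite (walk_vectors w p n)"
  using walk_vectors_subset_int_box finite_int_box by (rule finite_subset)

lemma card_walk_vectors_le:
  assumes "is_word w"
  shows "card (walk_vectors w p n)
           \<le> card (circuit_vectors w p n) + card (set w) * card (set w) * nat (2 * int (p + n) + 1) ^ card (set w)"
proof -
  let ?b = "card (set w)" and ?M = "int (p + n)"
  let ?box = "int_box (?b + 1) ?M"
  define coincide where "coincide xx = {z \<in> ?box. z (fst xx + 1) = z (snd xx + 1)}" for xx
  let ?pairs = "{xx \<in> {..<?b} \<times> {..<?b}. fst xx \<noteq> snd xx}"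
  have "walk_vectors w p n - circuit_vectors w p n \<subseteq> (\<Union>xx\<in>?pairs. coincide xx)"
    using walk_vectors_subset_int_box[OF assms]
    by (fastforce simp: circuit_vectors_def coincide_def inj_on_def)
  then have "card (walk_vectors w p n - circuit_vectors w p n) \<le> card (\<Union>xx\<in>?pairs. coincide xx)"
    by (rule card_mono[rotated]) (auto simp: coincide_def finite_int_box)
  also have "\<dots> \<le> (\<Sum>xx\<in>?pairs. card (coincide xx))"
    by (rule card_UN_le) simp
  also have "\<dots> \<le> (\<Sum>xx\<in>?pairs. nat (2 * ?M + 1) ^ ?b)"
  proof (rule sum_mono)
    fix xx assume xx: "xx \<in> ?pairs"
    have "card (coincide xx) \<le> card {-?M..?M} ^ (card {..<?b + 1} - 1)"
    proof (rule card_projection_le[where c = "fst xx + 1"])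
      show "fst xx + 1 \<in> {..<?b + 1}" "coincide xx \<subseteq> (\<Pi>\<^sub>E i\<in>{..<?b + 1}. {-?M..?M})"
        using xx by (auto simp: coincide_def int_box_def)
      fix z z' assume z: "z \<in> coincide xx" and z': "z' \<in> coincide xx"
        and rest: "\<forall>i\<in>{..<?b + 1} - {fst xx + 1}. z i = z' i"
      then have "z i = z' i" if "i \<in> {..<?b + 1}" for i
        using xx that by (cases "i = fst xx + 1") (auto simp: coincide_def)
      then show "z = z'"
        using z z' unfolding coincide_def int_box_def by (metis (no_types, lifting) PiE_ext mem_Collect_eq)
    qed simp_all
    then show "card (coincide xx) \<le> nat (2 * ?M + 1) ^ ?b"
      by simp
  qed
  also have "\<dots> \<le> ?b * ?b * nat (2 * ?M + 1) ^ ?b"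
  proof -
    have "card ?pairs \<le> card ({..<?b} \<times> {..<?b})"
      by (intro card_mono) auto
    then show ?thesis
      by (simp add: mult_right_mono)
  qed
  finally have "card (walk_vectors w p n - circuit_vectors w p n) \<le> ?b * ?b * nat (2 * ?M + 1) ^ ?b" .
  moreover have "finite (circuit_vectors w p n)"
    using finite_walk_vectors[OF assms] circuit_vectors_subset_walk_vectors by (rule finite_subset[rotated])
  ultimately show ?thesis
    using card_Diff_subset[OF _ circuit_vectors_subset_walk_vectors]
      card_mono[OF finite_walk_vectors[OF assms] circuit_vectors_subset_walk_vectors] by simp
qed

lemma card_walk_vectors_nonsymmetric:
  assumes "is_word w" "\<not> symmetric_word w"
  shows "card (walk_vectors w p n) \<le> nat (2 * int (p + n) + 1) ^ card (set w)"
proof -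
  let ?b = "card (set w)" and ?M = "int (p + n)"
  obtain x0 where x0: "x0 < ?b" "walk_coeff w (length w) x0 \<noteq> 0"
    using assms symmetric_word_iff_walk_coeff by blast
  have "card (walk_vectors w p n) \<le> card {-?M..?M} ^ (card {..<?b + 1} - 1)"
  proof (rule card_projection_le[where c = "x0 + 1"])
    show "x0 + 1 \<in> {..<?b + 1}" "walk_vectors w p n \<subseteq> (\<Pi>\<^sub>E i\<in>{..<?b + 1}. {-?M..?M})"
      using x0 walk_vectors_subset_int_box[OF assms(1)] by (auto simp: int_box_def)
    fix z z' assume z: "z \<in> walk_vectors w p n" and z': "z' \<in> walk_vectors w p n"
      and rest: "\<forall>i\<in>{..<?b + 1} - {x0 + 1}. z i = z' i"
    have closed: "(\<Sum>x<?b. walk_coeff w (length w) x * z (x + 1)) = 0"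
      "(\<Sum>x<?b. walk_coeff w (length w) x * z' (x + 1)) = 0"
      using z z' walk_eq_walk_coeff[OF assms(1) order_refl] by (simp_all add: walk_vectors_def)
    have "(\<Sum>x\<in>{..<?b} - {x0}. walk_coeff w (length w) x * z (x + 1))
          = (\<Sum>x\<in>{..<?b} - {x0}. walk_coeff w (length w) x * z' (x + 1))"
      using rest by (intro sum.cong) auto
    moreover have split: "(\<Sum>x<?b. walk_coeff w (length w) x * v (x + 1))
        = walk_coeff w (length w) x0 * v (x0 + 1) + (\<Sum>x\<in>{..<?b} - {x0}. walk_coeff w (length w) x * v (x + 1))"
      for v :: "nat \<Rightarrow> int"
      using x0(1) by (intro sum.remove) simp_all
    ultimately have "walk_coeff w (length w) x0 * z (x0 + 1) = walk_coeff w (length w) x0 * z' (x0 + 1)"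
      using closed split[of z] split[of z'] by linarith
    then have "z i = z' i" if "i \<in> {..<?b + 1}" for i
      using rest x0(2) that by (cases "i = x0 + 1") auto
    then show "z = z'"
      using z z' unfolding walk_vectors_def lattice_def by (metis (no_types, lifting) PiE_ext mem_Collect_eq)
  qed simp_all
  then show ?thesis
    by simp
qed

lemma card_circuit_vectors_ge:
  assumes "is_word w" "symmetric_word w"
    and "(4 * length w * card (set w) + 1) * h \<le> p" "(4 * length w * card (set w) + 1) * h \<le> n"
  shows "h ^ (card (set w) + 1) \<le> card (circuit_vectors w p n)"
proof -
  let ?b = "card (set w)"
  define D where "D = 2 * int (length w) * int ?b * int h"
  define I where "I c = (if c = 0 then {D + 1..D + int h}
                         else {2 * int (c - 1) * int h..2 * int (c - 1) * int h + int h - 1})" for c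
  let ?B = "\<Pi>\<^sub>E c\<in>{..<?b + 1}. I c"
  have "?B \<subseteq> circuit_vectors w p n"
  proof
    fix z assume z: "z \<in> ?B"
    have z0: "D + 1 \<le> z 0" "z 0 \<le> D + int h"
      using PiE_mem[OF z, of 0] by (simp_all add: I_def)
    have zx: "2 * int x * int h \<le> z (x + 1) \<and> z (x + 1) \<le> 2 * int x * int h + int h - 1" if "x < ?b" for x
      using PiE_mem[OF z, of "x + 1"] that by (simp add: I_def)
    have letter: "\<bar>alt_sign l * z (w ! (l - 1) + 1)\<bar> \<le> 2 * int ?b * int h" if "l \<in> {1..length w}" for l
    proof -
      let ?x = "w ! (l - 1)"
      have "?x < ?b"
        using letter_less_card[OF assms(1) that] .
      then have "(2 * int ?x + 1) * int h \<le> 2 * int ?b * int h"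
        by (intro mult_right_mono) simp_all
      then have "2 * int ?x * int h + int h \<le> 2 * int ?b * int h"
        by (simp add: algebra_simps)
      moreover have "0 \<le> 2 * int ?x * int h"
        by simp
      ultimately have "0 \<le> z (?x + 1)" "z (?x + 1) \<le> 2 * int ?b * int h"
        using zx[OF \<open>?x < ?b\<close>] by linarith+
      then show ?thesis
        by (simp add: alt_sign_def abs_mult)
    qed
    have drift: "\<bar>walk w z i - z 0\<bar> \<le> D" if "i \<le> length w" for i
    proof -
      have "\<bar>walk w z i - z 0\<bar> = \<bar>\<Sum>l\<in>{1..i}. alt_sign l * z (w ! (l - 1) + 1)\<bar>"
        by (simp add: walk_def)
      also have "\<dots> \<le> (\<Sum>l\<in>{1..i}. 2 * int ?b * int h)"
        using letter that by (intro order_trans[OF sum_abs] sum_mono) auto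
      also have "\<dots> \<le> D"
        using that by (simp add: D_def mult_right_mono)
      finally show ?thesis .
    qed
    have "int ((4 * length w * ?b + 1) * h) = 2 * D + int h"
      by (simp add: D_def algebra_simps)
    then have "2 * D + int h \<le> int p" "2 * D + int h \<le> int n"
      using assms(3,4) by (metis of_nat_le_iff)+
    then have bound: "2 * D + int h \<le> vertex_bound p n i" for i
      by (simp add: vertex_bound_def)
    have "1 \<le> walk w z i \<and> walk w z i \<le> vertex_bound p n i" if "i \<le> length w" for i
      using drift[OF that] z0 bound[of i] by (simp add: abs_le_iff)
    then have "\<forall>i \<le> length w. 1 \<le> walk w z i \<and> walk w z i \<le> vertex_bound p n i"
      by blast
    moreover have "z \<in> lattice (?b + 1)"
      using z by (auto simp: lattice_def PiE_iff)
    moreover have "inj_on (\<lambda>x. z (x + 1)) {..<?b}"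
    proof (rule linorder_inj_onI)
      fix x x' assume "x < x'" "x \<in> {..<?b}" "x' \<in> {..<?b}"
      moreover have "(2 * int x + 2) * int h \<le> 2 * int x' * int h"
        using \<open>x < x'\<close> by (intro mult_right_mono) simp_all
      ultimately show "z (x + 1) \<noteq> z (x' + 1)"
        using zx[of x] zx[of x'] by (simp add: algebra_simps)
    qed auto
    ultimately show "z \<in> circuit_vectors w p n"
      using walk_length_symmetric[OF assms(1,2)] by (simp add: circuit_vectors_def walk_vectors_def)
  qed
  moreover have "finite (circuit_vectors w p n)"
    using finite_walk_vectors[OF assms(1)] circuit_vectors_subset_walk_vectors by (rule finite_subset[rotated])
  moreover have "card ?B = h ^ (?b + 1)"
  proof -
    have "card (I c) = h" for c
      by (simp add: I_def)
    then show ?thesis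
      by (simp add: card_PiE)
  qed
  ultimately show ?thesis
    by (metis card_mono)
qed

definition walk_form :: "nat list \<Rightarrow> nat \<Rightarrow> nat \<Rightarrow> int" where
  "walk_form w i c = (if c = 0 then 1 else walk_coeff w i (c - 1))"

lemma lin_form_uminus: "lin_form d (- a) z = - lin_form d a z"
  by (simp add: lin_form_def sum_negf)

lemma lin_form_walk_form:
  assumes "is_word w" "i \<le> length w"
  shows "lin_form (card (set w) + 1) (walk_form w i) z = walk w z i"
  unfolding lin_form_def walk_eq_walk_coeff[OF assms]
  by (simp del: sum.lessThan_Suc add: sum.lessThan_Suc_shift walk_form_def)

lemma walk_vectors_eq_polyhedron:
  assumes "is_word w" "symmetric_word w"
  shows "walk_vectors w p n = polyhedron (card (set w) + 1) ({..length w} \<times> UNIV)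
           (\<lambda>(i, upper). if upper then walk_form w i else - walk_form w i)
           (\<lambda>(i, upper). if upper then real_of_int (vertex_bound p n i) else - 1)"
proof -
  have "(\<forall>j\<in>{..length w} \<times> UNIV.
           real_of_int (lin_form (card (set w) + 1) ((\<lambda>(i, upper). if upper then walk_form w i else - walk_form w i) j) z)
           \<le> (\<lambda>(i, upper). if upper then real_of_int (vertex_bound p n i) else - 1) j)
        \<longleftrightarrow> (\<forall>i \<le> length w. 1 \<le> walk w z i \<and> walk w z i \<le> vertex_bound p n i)" for z
    using lin_form_walk_form[OF assms(1)] by (auto simp: lin_form_uminus)
  then show ?thesis
    using walk_length_symmetric[OF assms] by (auto simp: walk_vectors_def polyhedron_def)
qed

lemma eventually_walk_vectors_bounded:
  assumes "is_word w" and p: "(\<lambda>n. real (p n) / real n) \<longlonglongrightarrow> y"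
  shows "eventually (\<lambda>n. \<forall>z\<in>walk_vectors w (p n) n. \<forall>i<card (set w) + 1.
           \<bar>real_of_int (z i)\<bar> \<le> (\<bar>y\<bar> + 2) * real n) sequentially"
proof -
  have "eventually (\<lambda>n. real (p n) / real n < \<bar>y\<bar> + 1) sequentially"
    using order_tendstoD(2)[OF p] by simp
  then show ?thesis
    using eventually_gt_at_top[of 0]
  proof eventually_elim
    case (elim n)
    then have "real (p n) \<le> (\<bar>y\<bar> + 1) * real n"
      by (simp add: divide_less_eq less_imp_le)
    moreover have "\<bar>real_of_int (z i)\<bar> \<le> real (p n) + real n"
      if "z \<in> walk_vectors w (p n) n" "i < card (set w) + 1" for z i
      using walk_vectors_bounded[OF assms(1) that] by linarith
    ultimately show ?case
      by (fastforce simp: algebra_simps)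
  qed
qed

lemma convergent_card_walk_vectors:
  assumes "is_word w" "symmetric_word w" and p: "(\<lambda>n. real (p n) / real n) \<longlonglongrightarrow> y"
  shows "convergent (\<lambda>n. real (card (walk_vectors w (p n) n)) / real n ^ (card (set w) + 1))"
proof -
  let ?J = "{..length w} \<times> (UNIV :: bool set)"
  let ?a = "\<lambda>(i, upper). if upper then walk_form w i else - walk_form w i"
  let ?c = "\<lambda>(i, upper) n. if upper then real_of_int (vertex_bound (p n) n i) else - 1"
  have eq: "walk_vectors w (p n) n = polyhedron (card (set w) + 1) ?J ?a (\<lambda>j. ?c j n)" for n
    using walk_vectors_eq_polyhedron[OF assms(1,2)] by (simp add: split_def)
  have "convergent (\<lambda>n. real (card (polyhedron (card (set w) + 1) ?J ?a (\<lambda>j. ?c j n))) / real n ^ (card (set w) + 1))"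
  proof (rule convergent_card_dilated_polyhedron[where C = "\<bar>y\<bar> + 2"
        and \<gamma> = "\<lambda>(i, upper). if upper then (if even i then y else 1) else 0"])
    show "\<forall>j\<in>?J. \<exists>i<card (set w) + 1. ?a j i \<noteq> 0"
      by (auto simp: walk_form_def)
    show "\<forall>j\<in>?J. (\<lambda>n. ?c j n / real n) \<longlonglongrightarrow> (\<lambda>(i, upper). if upper then (if even i then y else 1) else 0) j"
    proof
      fix j :: "nat \<times> bool"
      obtain i upper where j: "j = (i, upper)"
        by fastforce
      have "(\<lambda>n. - 1 / real n) \<longlonglongrightarrow> - 0"
        using tendsto_minus[OF lim_1_over_n] by simp
      moreover have "(\<lambda>n. real n / real n) \<longlonglongrightarrow> 1"
        by (rule Lim_transform_eventually[OF tendsto_const]) (simp add: eventually_gt_at_top[of 0]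
            eventually_mono)
      ultimately show "(\<lambda>n. ?c j n / real n) \<longlonglongrightarrow> (\<lambda>(i, upper). if upper then (if even i then y else 1) else 0) j"
        using p by (cases upper; cases "even i") (simp_all add: j vertex_bound_def)
    qed
    show "eventually (\<lambda>n. \<forall>z\<in>polyhedron (card (set w) + 1) ?J ?a (\<lambda>j. ?c j n).
                 \<forall>i<card (set w) + 1. \<bar>real_of_int (z i)\<bar> \<le> (\<bar>y\<bar> + 2) * real n) sequentially"
      using eventually_walk_vectors_bounded[OF assms(1) p] unfolding eq by simp
  qed (simp_all)
  then show ?thesis
    by (simp add: eq)
qed

lemma tendsto_box_card_over_power:
  assumes "(\<lambda>n. real (p n) / real n) \<longlonglongrightarrow> y"
  shows "(\<lambda>n. (2 * real (p n) + 2 * real n + 1) ^ b / real n ^ (b + 1)) \<longlonglongrightarrow> 0"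
proof -
  have "(\<lambda>n. (2 * (real (p n) / real n) + 2 + 1 / real n) ^ b * (1 / real n)) \<longlonglongrightarrow> (2 * y + 2 + 0) ^ b * 0"
    by (intro tendsto_intros assms lim_1_over_n)
  moreover have "eventually (\<lambda>n. (2 * (real (p n) / real n) + 2 + 1 / real n) ^ b * (1 / real n)
                   = (2 * real (p n) + 2 * real n + 1) ^ b / real n ^ (b + 1)) sequentially"
    using eventually_gt_at_top[of 0]
  proof eventually_elim
    case (elim n)
    then have "2 * (real (p n) / real n) + 2 + 1 / real n = (2 * real (p n) + 2 * real n + 1) / real n"
      by (simp add: field_simps)
    then show ?case
      by (simp add: power_divide)
  qed
  ultimately show ?thesis
    using Lim_transform_eventually by fastforce
qed

lemma tendsto_card_circuit_vectors_nonsymmetric: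
  assumes "is_word w" "\<not> symmetric_word w" "(\<lambda>n. real (p n) / real n) \<longlonglongrightarrow> y"
  shows "(\<lambda>n. real (card (circuit_vectors w (p n) n)) / real n ^ (card (set w) + 1)) \<longlonglongrightarrow> 0"
proof (rule tendsto_sandwich[OF _ _ tendsto_const tendsto_box_card_over_power[OF assms(3)]])
  have "real (card (circuit_vectors w (p n) n)) \<le> (2 * real (p n) + 2 * real n + 1) ^ card (set w)" for n
  proof -
    have "card (circuit_vectors w (p n) n) \<le> nat (2 * int (p n + n) + 1) ^ card (set w)"
      using card_mono[OF finite_walk_vectors[OF assms(1)] circuit_vectors_subset_walk_vectors]
        card_walk_vectors_nonsymmetric[OF assms(1,2)] by (rule order_trans)
    then have "real (card (circuit_vectors w (p n) n)) \<le> real (nat (2 * int (p n + n) + 1) ^ card (set w))"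
      by (simp only: of_nat_le_iff)
    then show ?thesis
      by simp
  qed
  then show "eventually (\<lambda>n. real (card (circuit_vectors w (p n) n)) / real n ^ (card (set w) + 1)
               \<le> (2 * real (p n) + 2 * real n + 1) ^ card (set w) / real n ^ (card (set w) + 1)) sequentially"
    by (intro always_eventually allI divide_right_mono) simp_all
qed simp

lemma eventually_card_circuit_vectors_ge:
  assumes "is_word w" "symmetric_word w" and p: "(\<lambda>n. real (p n) / real n) \<longlonglongrightarrow> y" and "0 < y"
  shows "\<exists>\<kappa>>0. eventually (\<lambda>n. \<kappa> \<le> real (card (circuit_vectors w (p n) n)) / real n ^ (card (set w) + 1))
                 sequentially"
proof -
  let ?b = "card (set w)"
  define R where "R = 4 * length w * ?b + 1"
  define Z :: nat where "Z = nat \<lceil>2 / y\<rceil> + 1"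
  define Q where "Q = R * Z"
  have Zy: "2 \<le> real Z * y"
  proof -
    have "2 / y \<le> real Z"
      unfolding Z_def by linarith
    then show ?thesis
      using \<open>0 < y\<close> by (simp add: divide_le_eq mult.commute)
  qed
  have Q: "0 < Q"
    by (simp add: Q_def R_def Z_def)
  define \<kappa> where "\<kappa> = (1 / (2 * real Q)) ^ (?b + 1)"
  have "eventually (\<lambda>n. y / 2 < real (p n) / real n) sequentially"
    using order_tendstoD(1)[OF p, of "y / 2"] \<open>0 < y\<close> by linarith
  then have "eventually (\<lambda>n. \<kappa> \<le> real (card (circuit_vectors w (p n) n)) / real n ^ (?b + 1)) sequentially"
    using eventually_ge_at_top[of "2 * Q"]
  proof eventually_elim
    case (elim n)
    define h where "h = n div Q"
    have n: "0 < real n"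
      using elim(2) Q by simp
    have Qh: "real Q * real h \<le> real n" "real n < real Q * real h + real Q"
    proof -
      have "Q * h \<le> n" "n < Q * h + Q"
        using mult_div_mod_eq[of Q n] mod_less_divisor[OF Q, of n] unfolding h_def by linarith+
      then show "real Q * real h \<le> real n" "real n < real Q * real h + real Q"
        by (simp_all only: of_nat_le_iff of_nat_less_iff of_nat_add of_nat_mult[symmetric])
    qed
    have "real (R * h) * 2 \<le> real (R * h) * (real Z * y)"
      using Zy by (intro mult_left_mono) simp_all
    also have "\<dots> \<le> real n * y"
      using Qh(1) \<open>0 < y\<close> by (simp add: Q_def mult_right_mono mult.assoc mult.left_commute)
    also have "\<dots> < 2 * real (p n)"
      using elim(1) n by (simp add: field_simps)
    finally have "R * h \<le> p n"
      by linarith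
    moreover have "R * h \<le> n"
    proof -
      have "real (R * h) * 1 \<le> real (R * h) * real Z"
        by (intro mult_left_mono) (simp_all add: Z_def)
      also have "\<dots> \<le> real n"
        using Qh(1) by (simp add: Q_def mult_ac)
      finally show ?thesis
        by linarith
    qed
    ultimately have "h ^ (?b + 1) \<le> card (circuit_vectors w (p n) n)"
      using card_circuit_vectors_ge[OF assms(1,2)] unfolding R_def by blast
    then have "real (h ^ (?b + 1)) \<le> real (card (circuit_vectors w (p n) n))"
      by (simp only: of_nat_le_iff)
    then have "real h ^ (?b + 1) / real n ^ (?b + 1) \<le> real (card (circuit_vectors w (p n) n)) / real n ^ (?b + 1)"
      by (intro divide_right_mono) simp_all
    moreover have "1 / (2 * real Q) \<le> real h / real n"
    proof -
      have "2 * real Q \<le> real n"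
        using elim(2) by simp
      then have "real n \<le> 2 * real Q * real h"
        using Qh(2) by linarith
      then show ?thesis
        using n Q by (simp add: field_simps)
    qed
    then have "\<kappa> \<le> (real h / real n) ^ (?b + 1)"
      unfolding \<kappa>_def by (rule power_mono) (simp add: Q)
    ultimately show ?case
      by (simp add: power_divide)
  qed
  moreover have "0 < \<kappa>"
    using Q by (simp add: \<kappa>_def)
  ultimately show ?thesis
    by blast
qed

lemma tendsto_card_circuit_vectors_symmetric:
  assumes "is_word w" "symmetric_word w" and p: "(\<lambda>n. real (p n) / real n) \<longlonglongrightarrow> y" and "0 < y"
  shows "\<exists>L>0. (\<lambda>n. real (card (circuit_vectors w (p n) n)) / real n ^ (card (set w) + 1)) \<longlonglongrightarrow> L"
proof -
  let ?b = "card (set w)"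
  let ?f = "\<lambda>n. real (card (circuit_vectors w (p n) n)) / real n ^ (?b + 1)"
  let ?g = "\<lambda>n. real (card (walk_vectors w (p n) n)) / real n ^ (?b + 1)"
  let ?e = "\<lambda>n. real (?b * ?b) * ((2 * real (p n) + 2 * real n + 1) ^ ?b / real n ^ (?b + 1))"
  obtain L where L: "?g \<longlonglongrightarrow> L"
    using convergent_card_walk_vectors[OF assms(1,2) p] by (auto simp: convergent_def)
  have "?f \<longlonglongrightarrow> L"
  proof (rule tendsto_sandwich[OF _ _ _ L])
    show "(\<lambda>n. ?g n - ?e n) \<longlonglongrightarrow> L"
      using tendsto_diff[OF L tendsto_mult[OF tendsto_const tendsto_box_card_over_power[OF p]]] by simp
    have "real (card (walk_vectors w (p n) n))
          \<le> real (card (circuit_vectors w (p n) n)) + real (?b * ?b) * (2 * real (p n) + 2 * real n + 1) ^ ?b" for n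
    proof -
      have "real (card (walk_vectors w (p n) n))
            \<le> real (card (circuit_vectors w (p n) n) + ?b * ?b * nat (2 * int (p n + n) + 1) ^ ?b)"
        using card_walk_vectors_le[OF assms(1)] by (simp only: of_nat_le_iff)
      then show ?thesis
        by simp
    qed
    then show "eventually (\<lambda>n. ?g n - ?e n \<le> ?f n) sequentially"
      by (intro always_eventually allI) (simp add: diff_le_eq add_divide_distrib[symmetric] divide_right_mono)
    show "eventually (\<lambda>n. ?f n \<le> ?g n) sequentially"
      using card_mono[OF finite_walk_vectors[OF assms(1)] circuit_vectors_subset_walk_vectors]
      by (intro always_eventually allI divide_right_mono) simp_all
  qed
  moreover obtain \<kappa> where "0 < \<kappa>" "eventually (\<lambda>n. \<kappa> \<le> ?f n) sequentially"
    using eventually_card_circuit_vectors_ge[OF assms] by blast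
  ultimately have "\<kappa> \<le> L"
    using tendsto_lowerbound by fastforce
  with \<open>?f \<longlonglongrightarrow> L\<close> \<open>0 < \<kappa>\<close> show ?thesis
    by (intro exI[of _ L]) simp
qed

lemma card_even_first_occ_le: "card {i \<in> {1..length w}. even i \<and> first_occ w i} \<le> card (set w)"
proof -
  let ?E = "{i \<in> {1..length w}. even i \<and> first_occ w i}"
  have "inj_on (\<lambda>i. w ! (i - 1)) ?E"
  proof (rule linorder_inj_onI)
    fix i j assume "i < j" "i \<in> ?E" "j \<in> ?E"
    then have "w ! (i - 1) \<in> set (take (j - 1) w)" "\<not> w ! (j - 1) \<in> set (take (j - 1) w)"
      by (auto simp: first_occ_def in_set_conv_nth intro!: exI[of _ "i - 1"])
    then show "w ! (i - 1) \<noteq> w ! (j - 1)"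
      by metis
  qed auto
  moreover have "(\<lambda>i. w ! (i - 1)) ` ?E \<subseteq> set w"
    by (auto intro!: nth_mem)
  ultimately show ?thesis
    by (simp add: card_inj_on_le)
qed

lemma tendsto_renormalize:
  fixes f :: "nat \<Rightarrow> real" and p :: "nat \<Rightarrow> nat"
  assumes f: "(\<lambda>n. f n / real n ^ (b + 1)) \<longlonglongrightarrow> L" and p: "(\<lambda>n. real (p n) / real n) \<longlonglongrightarrow> y"
    and "0 < y" "r \<le> b"
  shows "(\<lambda>n. f n / (real (p n) ^ (r + 1) * real n ^ (b - r))) \<longlonglongrightarrow> L / y ^ (r + 1)"
proof -
  have "(\<lambda>n. real n / real (p n)) \<longlonglongrightarrow> 1 / y"
    using tendsto_inverse[OF p] \<open>0 < y\<close> by (simp add: inverse_eq_divide)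
  then have "(\<lambda>n. f n / real n ^ (b + 1) * (real n / real (p n)) ^ (r + 1)) \<longlonglongrightarrow> L * (1 / y) ^ (r + 1)"
    by (intro tendsto_mult f tendsto_power)
  moreover have "eventually (\<lambda>n. 0 < real (p n) / real n) sequentially"
    using order_tendstoD(1)[OF p \<open>0 < y\<close>] .
  then have "eventually (\<lambda>n. f n / real n ^ (b + 1) * (real n / real (p n)) ^ (r + 1)
      = f n / (real (p n) ^ (r + 1) * real n ^ (b - r))) sequentially"
    using eventually_gt_at_top[of 0]
  proof eventually_elim
    case (elim n)
    then have "0 < real (p n)"
      by (simp add: zero_less_divide_iff)
    moreover have "real n ^ (b + 1) = real n ^ (r + 1) * real n ^ (b - r)"
      using \<open>r \<le> b\<close> by (simp flip: power_add)
    ultimately show ?case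
      using elim(2) by (simp add: power_divide field_simps)
  qed
  ultimately show ?thesis
    by (simp add: Lim_transform_eventually power_one_over)
qed

theorem lemma5p5:
  fixes p :: "nat \<Rightarrow> nat" and y :: real and w :: "nat list" and k b r :: nat
  assumes "(\<lambda>n. real (p n) / real n) \<longlonglongrightarrow> y"
    and "0 < y"
    and "is_word w"
    and "length w = 2 * k"
    and "b = card (set w)"
    and "r + 1 = even_generating w"
  shows "\<exists>l. (\<lambda>n. real (card (Pi_S L_T (p n) n k w)) / (real (p n) ^ (r + 1) * real n ^ (b - r)))
              \<longlonglongrightarrow> l
           \<and> (symmetric_word w \<longrightarrow> l > 0) \<and> (\<not> symmetric_word w \<longrightarrow> l = 0)"
proof -
  obtain L where L: "(\<lambda>n. real (card (circuit_vectors w (p n) n)) / real n ^ (b + 1)) \<longlonglongrightarrow> L"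
    and sign: "symmetric_word w \<longrightarrow> L > 0" "\<not> symmetric_word w \<longrightarrow> L = 0"
    using tendsto_card_circuit_vectors_symmetric[OF assms(3) _ assms(1,2)]
      tendsto_card_circuit_vectors_nonsymmetric[OF assms(3) _ assms(1)] assms(5) by blast
  have "r \<le> b"
    using assms(5,6) card_even_first_occ_le[of w] by (simp add: even_generating_def)
  with L have "(\<lambda>n. real (card (Pi_S L_T (p n) n k w)) / (real (p n) ^ (r + 1) * real n ^ (b - r)))
                 \<longlonglongrightarrow> L / y ^ (r + 1)"
    unfolding card_Pi_S_L_T[OF assms(3,4)] by (rule tendsto_renormalize[OF _ assms(1,2)])
  then show ?thesis
    using sign assms(2) by (intro exI[of _ "L / y ^ (r + 1)"]) simp
qed

end
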